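(* Let $\pi$ be a permutation of $\{1,\dots,n\}$. A set $M$ of edges of $G(\pi)$ is an induced matching if and only if the corresponding set of matches can be ordered as a chain $e_1<e_2<\dots<e_k$. Consequently, the size of a maximum induced matching of $G(\pi)$ equals the maximum length of a chain of matches.
   Context: $\pi^{-1}(i)$ denotes the position of $i$ in $\pi$. The permutation graph $G(\pi)$ has vertex set $\{1,\dots,n\}$ and $uv$ is an edge iff $(u-v)(\pi^{-1}(u)-\pi^{-1}(v))<0$. A match is an ordered pair $(x,y)$ with $1\le x<y\le n$ and $\pi^{-1}(x)>\pi^{-1}(y)$; matches correspond bijectively to edges $xy$ of $G(\pi)$. For matches $e=(x,y)$ and $e'=(x',y')$ we write $e<e'$ if $y<x'$ and $\pi^{-1}(x)<\pi^{-1}(y')$. A chain is a sequence of matches $e_1,\dots,e_k$ with $e_i<e_{i+1}$ for all $1\le i<k$; its length is $k$. An induced matching of a graph $G=(V,E)$ is a set $M\subseteq E$ such that for any two distinct edges $u_1v_1,u_2v_2\in M$, none of $u_1u_2,u_1v_2,v_1u_2,v_1v_2$ is in $E$. *)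

theory Defs
  imports "HOL-Combinatorics.Permutations"
begin

text \<open>A permutation \<pi> of {1..n} is a bijection with \<pi> permutes {1..n}; \<pi> i is the entry at
  position i, so the position of value i is inv \<pi> i.\<close>

definition pos :: "(nat \<Rightarrow> nat) \<Rightarrow> nat \<Rightarrow> nat" where
  "pos \<pi> i = inv \<pi> i"

definition perm_graph_edges :: "nat \<Rightarrow> (nat \<Rightarrow> nat) \<Rightarrow> nat set set" where
  "perm_graph_edges n \<pi> = {{u, v} | u v. u \<in> {1..n} \<and> v \<in> {1..n} \<and>
      (int u - int v) * (int (pos \<pi> u) - int (pos \<pi> v)) < 0}"

definition induced_matching :: "'a set set \<Rightarrow> 'a set set \<Rightarrow> bool" where
  "induced_matching E M \<longleftrightarrow> M \<subseteq> E \<and>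
     (\<forall>e1\<in>M. \<forall>e2\<in>M. e1 \<noteq> e2 \<longrightarrow> (\<forall>u\<in>e1. \<forall>v\<in>e2. {u, v} \<notin> E))"

definition is_match :: "nat \<Rightarrow> (nat \<Rightarrow> nat) \<Rightarrow> nat \<times> nat \<Rightarrow> bool" where
  "is_match n \<pi> e \<longleftrightarrow> 1 \<le> fst e \<and> fst e < snd e \<and> snd e \<le> n \<and> pos \<pi> (fst e) > pos \<pi> (snd e)"

definition match_less :: "(nat \<Rightarrow> nat) \<Rightarrow> nat \<times> nat \<Rightarrow> nat \<times> nat \<Rightarrow> bool" where
  "match_less \<pi> e e' \<longleftrightarrow> snd e < fst e' \<and> pos \<pi> (fst e) < pos \<pi> (snd e')"

definition is_chain :: "nat \<Rightarrow> (nat \<Rightarrow> nat) \<Rightarrow> (nat \<times> nat) list \<Rightarrow> bool" where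
  "is_chain n \<pi> es \<longleftrightarrow> (\<forall>e\<in>set es. is_match n \<pi> e) \<and>
     (\<forall>i. Suc i < length es \<longrightarrow> match_less \<pi> (es ! i) (es ! Suc i))"

definition matches_of :: "nat \<Rightarrow> (nat \<Rightarrow> nat) \<Rightarrow> nat set set \<Rightarrow> (nat \<times> nat) set" where
  "matches_of n \<pi> M = {e. is_match n \<pi> e \<and> {fst e, snd e} \<in> M}"

end

theory Submission
  imports Defs
begin

text \<open>Two distinct vertices of G(\<pi>) are non-adjacent exactly when their value order and
  their position order agree. Consequently the endpoints of two matches are pairwise
  non-adjacent exactly when one match lies entirely below and to the left of the other, which
  is the relation e < e'. So M is an induced matching iff its matches are pairwise comparable
  under <. On matches < is transitive and increases the smaller endpoint, hence pairwise
  comparable sets of matches are precisely the element sets of chains, listed by their smaller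
  endpoints. As matches correspond bijectively to edges, the two maxima coincide.\<close>

lemma distinct_if_sorted_wrt_irrefl:
  assumes "\<And>x. x \<in> set xs \<Longrightarrow> \<not> R x x" and "sorted_wrt R xs"
  shows "distinct xs"
  using assms by (induction xs) auto

lemma obtain_sorted_list_of_comparable_set:
  fixes key :: "'a \<Rightarrow> 'b::linorder"
  assumes "finite S"
    and comparable: "\<And>a b. a \<in> S \<Longrightarrow> b \<in> S \<Longrightarrow> a \<noteq> b \<Longrightarrow> R a b \<or> R b a"
    and key_mono: "\<And>a b. a \<in> S \<Longrightarrow> b \<in> S \<Longrightarrow> R a b \<Longrightarrow> key a < key b"
  obtains xs where "sorted_wrt R xs" "set xs = S"
proof -
  have "inj_on key S"
    by (rule inj_onI) (metis comparable key_mono less_irrefl)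
  then interpret folding_insort_key "(\<le>)" "(<)" S key
    by unfold_locales
  obtain xs where sorted_key: "sorted_wrt (<) (map key xs)" and set_xs: "set xs = S"
    using finite_set_strict_sorted[OF order_refl \<open>finite S\<close>] by blast
  have "sorted_wrt R xs"
    using sorted_key unfolding sorted_wrt_map
    by (rule sorted_wrt_mono_rel[rotated])
      (metis comparable key_mono less_asym less_irrefl set_xs)
  with set_xs show thesis by (rule that[rotated])
qed

abbreviation match_edge :: "nat \<times> nat \<Rightarrow> nat set" where
  "match_edge m \<equiv> {fst m, snd m}"

definition separated :: "'a set set \<Rightarrow> 'a set \<Rightarrow> 'a set \<Rightarrow> bool" where
  "separated E A B \<longleftrightarrow> (\<forall>u\<in>A. \<forall>v\<in>B. {u, v} \<notin> E)"

lemma induced_matching_iff_separated: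
  "induced_matching E M \<longleftrightarrow> M \<subseteq> E \<and> (\<forall>e1\<in>M. \<forall>e2\<in>M. e1 \<noteq> e2 \<longrightarrow> separated E e1 e2)"
  unfolding induced_matching_def separated_def ..

lemma separated_commute: "separated E A B \<longleftrightarrow> separated E B A"
  unfolding separated_def by (metis doubleton_eq_iff)

lemma separated_disjoint:
  assumes "{a, b} \<in> E" and "separated E {a, b} B"
  shows "{a, b} \<inter> B = {}"
  using assms unfolding separated_def by (auto simp: insert_commute[of _ _ "{}"])

lemma perm_graph_edge_iff:
  "{u, v} \<in> perm_graph_edges n \<pi> \<longleftrightarrow> u \<in> {1..n} \<and> v \<in> {1..n} \<and>
     (int u - int v) * (int (pos \<pi> u) - int (pos \<pi> v)) < 0"
proof
  assume "{u, v} \<in> perm_graph_edges n \<pi>"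
  then obtain a b where ab: "{u, v} = {a, b}" "a \<in> {1..n}" "b \<in> {1..n}"
      "(int a - int b) * (int (pos \<pi> a) - int (pos \<pi> b)) < 0"
    unfolding perm_graph_edges_def by blast
  moreover have "(int b - int a) * (int (pos \<pi> b) - int (pos \<pi> a))
      = (int a - int b) * (int (pos \<pi> a) - int (pos \<pi> b))"
    by algebra
  ultimately show "u \<in> {1..n} \<and> v \<in> {1..n} \<and> (int u - int v) * (int (pos \<pi> u) - int (pos \<pi> v)) < 0"
    by (auto simp: doubleton_eq_iff)
qed (auto simp: perm_graph_edges_def)

lemma perm_graph_non_edge_iff:
  assumes "inj_on (pos \<pi>) {1..n}" and "u \<in> {1..n}" "v \<in> {1..n}" "u \<noteq> v"
  shows "{u, v} \<notin> perm_graph_edges n \<pi> \<longleftrightarrow>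
    u < v \<and> pos \<pi> u < pos \<pi> v \<or> v < u \<and> pos \<pi> v < pos \<pi> u"
proof -
  have "pos \<pi> u \<noteq> pos \<pi> v"
    using assms by (auto dest: inj_onD)
  then show ?thesis
    using assms(2-4) by (auto simp: perm_graph_edge_iff mult_less_0_iff)
qed

lemma match_edge_in_perm_graph: "is_match n \<pi> m \<Longrightarrow> match_edge m \<in> perm_graph_edges n \<pi>"
  unfolding perm_graph_edge_iff is_match_def by (auto simp: mult_less_0_iff)

lemma perm_graph_edge_is_match_edge:
  assumes "e \<in> perm_graph_edges n \<pi>"
  obtains m where "is_match n \<pi> m" "e = match_edge m"
proof -
  obtain u v where "e = {u, v}" "u \<in> {1..n}" "v \<in> {1..n}"
      "(int u - int v) * (int (pos \<pi> u) - int (pos \<pi> v)) < 0"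
    using assms unfolding perm_graph_edges_def by blast
  then have "is_match n \<pi> (u, v) \<and> e = match_edge (u, v) \<or> is_match n \<pi> (v, u) \<and> e = match_edge (v, u)"
    unfolding is_match_def by (auto simp: mult_less_0_iff)
  with that show thesis by blast
qed

lemma inj_on_match_edge: "inj_on match_edge {m. fst m < snd m}"
  by (rule inj_onI) (auto simp: doubleton_eq_iff prod_eq_iff)

lemma separated_iff_match_less:
  assumes inj: "inj_on (pos \<pi>) {1..n}" and m1: "is_match n \<pi> m1" and m2: "is_match n \<pi> m2"
  shows "separated (perm_graph_edges n \<pi>) (match_edge m1) (match_edge m2)
     \<longleftrightarrow> match_less \<pi> m1 m2 \<or> match_less \<pi> m2 m1"
proof
  assume sep: "separated (perm_graph_edges n \<pi>) (match_edge m1) (match_edge m2)"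
  have "match_edge m1 \<inter> match_edge m2 = {}"
    using separated_disjoint[OF match_edge_in_perm_graph[OF m1] sep] .
  have agree: "u < v \<and> pos \<pi> u < pos \<pi> v \<or> v < u \<and> pos \<pi> v < pos \<pi> u"
    if u: "u \<in> match_edge m1" and v: "v \<in> match_edge m2" for u v
  proof -
    have "u \<in> {1..n}" "v \<in> {1..n}"
      using m1 m2 u v unfolding is_match_def by auto
    moreover have "u \<noteq> v"
      using \<open>match_edge m1 \<inter> match_edge m2 = {}\<close> u v by blast
    moreover have "{u, v} \<notin> perm_graph_edges n \<pi>"
      using sep u v unfolding separated_def by blast
    ultimately show ?thesis
      using perm_graph_non_edge_iff[OF inj] by blast
  qed
  obtain x1 y1 x2 y2 where "m1 = (x1, y1)" "m2 = (x2, y2)"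
    by fastforce
  with agree[of x1 x2] agree[of x1 y2] agree[of y1 x2] agree[of y1 y2] m1 m2
  show "match_less \<pi> m1 m2 \<or> match_less \<pi> m2 m1"
    unfolding is_match_def match_less_def by auto
next
  have "separated (perm_graph_edges n \<pi>) (match_edge a) (match_edge b)"
    if "is_match n \<pi> a" "is_match n \<pi> b" "match_less \<pi> a b" for a b
    using that unfolding separated_def perm_graph_edge_iff is_match_def match_less_def
    by (auto simp: mult_less_0_iff)
  then show "match_less \<pi> m1 m2 \<or> match_less \<pi> m2 m1 \<Longrightarrow>
      separated (perm_graph_edges n \<pi>) (match_edge m1) (match_edge m2)"
    using m1 m2 separated_commute by blast
qed

lemma matches_of_match_edge_image:
  assumes "\<And>m. m \<in> S \<Longrightarrow> is_match n \<pi> m"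
  shows "matches_of n \<pi> (match_edge ` S) = S"
proof -
  have "m \<in> S" if "is_match n \<pi> m" "m' \<in> S" "match_edge m = match_edge m'" for m m'
  proof -
    have "m = m'"
      using inj_onD[OF inj_on_match_edge that(3)] that(1) assms[OF that(2)]
      by (simp add: is_match_def)
    with that(2) show ?thesis by simp
  qed
  then show ?thesis
    using assms unfolding matches_of_def by blast
qed

lemma bij_betw_match_edge_matches_of:
  assumes "M \<subseteq> perm_graph_edges n \<pi>"
  shows "bij_betw match_edge (matches_of n \<pi> M) M"
proof (rule bij_betw_imageI)
  show "inj_on match_edge (matches_of n \<pi> M)"
    by (rule inj_on_subset[OF inj_on_match_edge]) (auto simp: matches_of_def is_match_def)
  show "match_edge ` matches_of n \<pi> M = M"
  proof
    show "match_edge ` matches_of n \<pi> M \<subseteq> M"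
      by (auto simp: matches_of_def)
    show "M \<subseteq> match_edge ` matches_of n \<pi> M"
    proof
      fix e assume "e \<in> M"
      with assms obtain m where "is_match n \<pi> m" "e = match_edge m"
        by (blast elim: perm_graph_edge_is_match_edge)
      with \<open>e \<in> M\<close> show "e \<in> match_edge ` matches_of n \<pi> M"
        unfolding matches_of_def by blast
    qed
  qed
qed

lemma finite_matches_of: "finite (matches_of n \<pi> M)"
  by (rule finite_subset[of _ "{1..n} \<times> {1..n}"]) (auto simp: matches_of_def is_match_def)

lemma induced_matching_iff_matches_comparable:
  assumes inj: "inj_on (pos \<pi>) {1..n}" and M: "M \<subseteq> perm_graph_edges n \<pi>"
  shows "induced_matching (perm_graph_edges n \<pi>) M \<longleftrightarrow>
    (\<forall>a\<in>matches_of n \<pi> M. \<forall>b\<in>matches_of n \<pi> M. a \<noteq> b \<longrightarrow> match_less \<pi> a b \<or> match_less \<pi> b a)"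
proof -
  let ?E = "perm_graph_edges n \<pi>" and ?S = "matches_of n \<pi> M"
  have bij: "bij_betw match_edge ?S M"
    using bij_betw_match_edge_matches_of[OF M] .
  have img: "match_edge ` ?S = M"
    using bij by (simp add: bij_betw_def)
  have "induced_matching ?E M \<longleftrightarrow> (\<forall>e1\<in>match_edge ` ?S. \<forall>e2\<in>match_edge ` ?S.
      e1 \<noteq> e2 \<longrightarrow> separated ?E e1 e2)"
    unfolding img using M by (simp add: induced_matching_iff_separated)
  also have "\<dots> \<longleftrightarrow> (\<forall>a\<in>?S. \<forall>b\<in>?S.
      match_edge a \<noteq> match_edge b \<longrightarrow> separated ?E (match_edge a) (match_edge b))"
    by simp
  also have "\<dots> \<longleftrightarrow> (\<forall>a\<in>?S. \<forall>b\<in>?S. a \<noteq> b \<longrightarrow> separated ?E (match_edge a) (match_edge b))"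
  proof (intro ball_cong refl)
    fix a b assume "a \<in> ?S" "b \<in> ?S"
    then have "match_edge a = match_edge b \<longleftrightarrow> a = b"
      by (rule inj_on_eq_iff[OF bij_betw_imp_inj_on[OF bij]])
    then show "(match_edge a \<noteq> match_edge b \<longrightarrow> separated ?E (match_edge a) (match_edge b)) \<longleftrightarrow>
        (a \<noteq> b \<longrightarrow> separated ?E (match_edge a) (match_edge b))"
      by simp
  qed
  also have "\<dots> \<longleftrightarrow> (\<forall>a\<in>?S. \<forall>b\<in>?S. a \<noteq> b \<longrightarrow> match_less \<pi> a b \<or> match_less \<pi> b a)"
    using separated_iff_match_less[OF inj] by (simp add: matches_of_def)
  finally show ?thesis .
qed

lemma match_less_trans:
  "is_match n \<pi> b \<Longrightarrow> match_less \<pi> a b \<Longrightarrow> match_less \<pi> b c \<Longrightarrow> match_less \<pi> a c"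
  unfolding is_match_def match_less_def by auto

lemma match_less_irrefl: "is_match n \<pi> a \<Longrightarrow> \<not> match_less \<pi> a a"
  unfolding is_match_def match_less_def by auto

lemma match_less_fst_less: "is_match n \<pi> a \<Longrightarrow> match_less \<pi> a b \<Longrightarrow> fst a < fst b"
  unfolding is_match_def match_less_def by auto

lemma sorted_wrt_comparable:
  "sorted_wrt R xs \<Longrightarrow> a \<in> set xs \<Longrightarrow> b \<in> set xs \<Longrightarrow> a \<noteq> b \<Longrightarrow> R a b \<or> R b a"
  by (induction xs) auto

lemma is_chain_iff_sorted_wrt:
  "is_chain n \<pi> es \<longleftrightarrow> (\<forall>e\<in>set es. is_match n \<pi> e) \<and> sorted_wrt (match_less \<pi>) es"
proof (cases "\<forall>e\<in>set es. is_match n \<pi> e")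
  case True
  let ?R = "\<lambda>a b. is_match n \<pi> a \<and> match_less \<pi> a b"
  have "transp ?R"
    by (rule transpI) (blast intro: match_less_trans)
  have "sorted_wrt (match_less \<pi>) es \<longleftrightarrow> sorted_wrt ?R es"
  proof
    show "sorted_wrt (match_less \<pi>) es \<Longrightarrow> sorted_wrt ?R es"
      by (erule sorted_wrt_mono_rel[rotated]) (simp add: True)
    show "sorted_wrt ?R es \<Longrightarrow> sorted_wrt (match_less \<pi>) es"
      by (erule sorted_wrt_mono_rel[rotated]) simp
  qed
  also have "\<dots> \<longleftrightarrow> (\<forall>i. Suc i < length es \<longrightarrow> match_less \<pi> (es ! i) (es ! Suc i))"
    using True by (simp add: sorted_wrt_iff_nth_Suc_transp[OF \<open>transp ?R\<close>])
  finally show ?thesis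
    using True unfolding is_chain_def by blast
qed (auto simp: is_chain_def)

lemma distinct_if_is_chain: "is_chain n \<pi> es \<Longrightarrow> distinct es"
  by (rule distinct_if_sorted_wrt_irrefl[of _ "match_less \<pi>"])
    (auto simp: is_chain_iff_sorted_wrt match_less_irrefl)

lemma induced_matching_iff_is_chain:
  assumes inj: "inj_on (pos \<pi>) {1..n}" and M: "M \<subseteq> perm_graph_edges n \<pi>"
  shows "induced_matching (perm_graph_edges n \<pi>) M \<longleftrightarrow>
    (\<exists>es. is_chain n \<pi> es \<and> distinct es \<and> set es = matches_of n \<pi> M)"
proof
  assume "induced_matching (perm_graph_edges n \<pi>) M"
  then have comparable:
      "\<And>a b. a \<in> matches_of n \<pi> M \<Longrightarrow> b \<in> matches_of n \<pi> M \<Longrightarrow> a \<noteq> b \<Longrightarrow>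
         match_less \<pi> a b \<or> match_less \<pi> b a"
    using induced_matching_iff_matches_comparable[OF inj M] by blast
  moreover have "\<And>a b. a \<in> matches_of n \<pi> M \<Longrightarrow> match_less \<pi> a b \<Longrightarrow> fst a < fst b"
    unfolding matches_of_def using match_less_fst_less by blast
  ultimately obtain es where "sorted_wrt (match_less \<pi>) es" "set es = matches_of n \<pi> M"
    using obtain_sorted_list_of_comparable_set[OF finite_matches_of] by blast
  then have "is_chain n \<pi> es"
    by (auto simp: is_chain_iff_sorted_wrt matches_of_def)
  with \<open>set es = matches_of n \<pi> M\<close> distinct_if_is_chain
  show "\<exists>es. is_chain n \<pi> es \<and> distinct es \<and> set es = matches_of n \<pi> M"
    by blast
next
  assume "\<exists>es. is_chain n \<pi> es \<and> distinct es \<and> set es = matches_of n \<pi> M"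
  then show "induced_matching (perm_graph_edges n \<pi>) M"
    using induced_matching_iff_matches_comparable[OF inj M]
    by (auto simp: is_chain_iff_sorted_wrt dest: sorted_wrt_comparable)
qed

lemma card_matches_of:
  "M \<subseteq> perm_graph_edges n \<pi> \<Longrightarrow> card (matches_of n \<pi> M) = card M"
  by (rule bij_betw_same_card[OF bij_betw_match_edge_matches_of])

lemma induced_matching_sizes_eq_chain_lengths:
  assumes inj: "inj_on (pos \<pi>) {1..n}"
  shows "{card M | M. induced_matching (perm_graph_edges n \<pi>) M} = {length es | es. is_chain n \<pi> es}"
proof (intro equalityI subsetI)
  fix k assume "k \<in> {card M | M. induced_matching (perm_graph_edges n \<pi>) M}"
  then obtain M where M: "induced_matching (perm_graph_edges n \<pi>) M" "k = card M"
    by blast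
  then have sub: "M \<subseteq> perm_graph_edges n \<pi>"
    by (simp add: induced_matching_def)
  with M inj obtain es where es: "is_chain n \<pi> es" "distinct es" "set es = matches_of n \<pi> M"
    using induced_matching_iff_is_chain by blast
  have "length es = k"
    using distinct_card[OF es(2)] es(3) card_matches_of[OF sub] M(2) by simp
  with es(1) show "k \<in> {length es | es. is_chain n \<pi> es}"
    by blast
next
  fix k assume "k \<in> {length es | es. is_chain n \<pi> es}"
  then obtain es where es: "is_chain n \<pi> es" "k = length es"
    by blast
  define M where "M = match_edge ` set es"
  have matches: "\<And>e. e \<in> set es \<Longrightarrow> is_match n \<pi> e"
    using es(1) by (simp add: is_chain_def)
  then have sub: "M \<subseteq> perm_graph_edges n \<pi>"
    unfolding M_def using match_edge_in_perm_graph by blast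
  have set_es: "matches_of n \<pi> M = set es"
    unfolding M_def using matches by (rule matches_of_match_edge_image)
  have "induced_matching (perm_graph_edges n \<pi>) M"
    using induced_matching_iff_is_chain[OF inj sub] es(1) distinct_if_is_chain[OF es(1)] set_es
    by blast
  moreover have "card M = k"
    using card_matches_of[OF sub] set_es distinct_card[OF distinct_if_is_chain[OF es(1)]] es(2)
    by simp
  ultimately show "k \<in> {card M | M. induced_matching (perm_graph_edges n \<pi>) M}"
    by blast
qed

theorem mainTheorem6:
  fixes n :: nat and \<pi> :: "nat \<Rightarrow> nat"
  assumes "\<pi> permutes {1..n}"
  shows "(\<forall>M. M \<subseteq> perm_graph_edges n \<pi> \<longrightarrow>
            (induced_matching (perm_graph_edges n \<pi>) M \<longleftrightarrow>
             (\<exists>es. is_chain n \<pi> es \<and> distinct es \<and> set es = matches_of n \<pi> M)))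
       \<and> Max {card M | M. induced_matching (perm_graph_edges n \<pi>) M}
           = Max {length es | es. is_chain n \<pi> es}"
proof -
  have "inj_on (pos \<pi>) {1..n}"
    using permutes_inj[OF permutes_inv[OF assms]] unfolding pos_def[abs_def]
    by (rule inj_on_subset) simp
  then show ?thesis
    using induced_matching_iff_is_chain induced_matching_sizes_eq_chain_lengths by simp
qed

end
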